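(* Let $N\ge 5$ be odd, and let $G_{N,1}$ be the graph with vertex set $\mathbb Z_N=\{0,1,\dots,N-1\}$ in which two distinct vertices $i,j$ are adjacent if and only if $j-i\not\equiv\pm1\pmod N$. Put $\Delta=\sqrt{N(N-4)}$ and $\rho=\frac{N-2+\Delta}{2}$. For $u,v\in\mathbb Z_N$ let $q\in\{0,1,\dots,N-1\}$ with $q\equiv v-u\pmod N$. Then the effective resistance between $u$ and $v$ in $G_{N,1}$ (all edges of unit conductance) is \[ R^{(1)}(u,v)=\frac{2}{\Delta(\rho^N+1)}\left\{\rho^N-1+(-1)^q(\rho^q-\rho^{N-q})\right\}. \] Moreover, the right-hand side is invariant under $q\mapsto N-q$, so the resistance depends only on $h(u,v)=\min\{q,N-q\}$, and $R^{(1)}(u,v)>0$ whenever $u\ne v$.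
   Context: The effective resistance is that of the electrical network obtained by placing a unit resistor on each edge; equivalently $R(u,v)=(e_u-e_v)^T L^{+}(e_u-e_v)$ with $L^+$ the Moore–Penrose pseudoinverse of the Laplacian. *)

theory Defs
  imports Complex_Main "Jordan_Normal_Form.Matrix"
begin

definition adjN :: "nat \<Rightarrow> nat \<Rightarrow> nat \<Rightarrow> bool" where
  "adjN N i j \<longleftrightarrow> i < N \<and> j < N \<and> i \<noteq> j \<and>
     (int j - int i) mod int N \<noteq> 1 \<and> (int j - int i) mod int N \<noteq> (int N - 1)"

definition degN :: "nat \<Rightarrow> nat \<Rightarrow> nat" where
  "degN N i = card {j. j < N \<and> adjN N i j}"

definition laplacianN :: "nat \<Rightarrow> real mat" where
  "laplacianN N = mat N N (\<lambda>(i,j). if i = j then real (degN N i)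
                                  else if adjN N i j then -1 else 0)"

definition pinv :: "real mat \<Rightarrow> real mat" where
  "pinv A = (THE X. X \<in> carrier_mat (dim_col A) (dim_row A) \<and>
                    A * X * A = A \<and> X * A * X = X \<and>
                    transpose_mat (A * X) = A * X \<and> transpose_mat (X * A) = X * A)"

definition eff_res :: "nat \<Rightarrow> nat \<Rightarrow> nat \<Rightarrow> real" where
  "eff_res N u v = (let x = unit_vec N u - unit_vec N v in x \<bullet> (pinv (laplacianN N) *\<^sub>v x))"

definition DeltaN :: "nat \<Rightarrow> real" where
  "DeltaN N = sqrt (real N * (real N - 4))"

definition rhoN :: "nat \<Rightarrow> real" where
  "rhoN N = (real N - 2 + DeltaN N) / 2"

definition resist_formula :: "nat \<Rightarrow> nat \<Rightarrow> real" where
  "resist_formula N q = 2 / (DeltaN N * (rhoN N ^ N + 1)) *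
     (rhoN N ^ N - 1 + (-1) ^ q * (rhoN N ^ q - rhoN N ^ (N - q)))"

end

theory Submission
  imports Defs
begin

(* G_{N,1} is the complement of the N-cycle, so its Laplacian is the circulant matrix
   L = (N - 2) I + C + C^T - J, with C the cyclic shift. Circulant matrices commute and multiply
   by cyclic convolution of their first columns. Hence if g solves
     (N - 2) g(m) + g(m - 1) + g(m + 1) = [m = 0] - 1/N   (indices mod N)   and   sum g = 0,
   the circulant X with first column g satisfies L X = X L = I - J/N, which gives the four
   Penrose equations, so X = L^+. As -rho and -1/rho are the roots of s^2 + (N - 2) s + 1,
   the solution is g(m) = -((-rho)^m + (-rho)^(N-m)) / (Delta (1 - (-rho)^N)) - 1/N^2, and
   R(u, v) = 2 (g(0) - g(q)). For odd N, (-rho)^N = -rho^N turns this into the stated formula. *)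

(* The residue of i - j is written (i + N - j) mod N, which avoids truncated subtraction on nat
   as long as j \<le> N. *)

lemma int_residue_diff:
  "j \<le> N \<Longrightarrow> int ((i + N - j) mod N) = (int i - int j) mod int N"
proof -
  assume "j \<le> N"
  then have "int (i + N - j) = (int i - int j) + int N" by simp
  then show ?thesis by (simp add: zmod_int)
qed

lemma residue_diff_eq:
  fixes i j N :: nat
  assumes "i < N" "j < N"
  shows "(i + N - j) mod N = (if j \<le> i then i - j else i + N - j)"
proof (cases "j \<le> i")
  case True
  then have "i + N - j = (i - j) + N" by simp
  then have "(i + N - j) mod N = (i - j) mod N" by (simp only: mod_add_self2)
  then show ?thesis using True assms by simp
qed (use assms in simp)

lemma residue_diff_swap:
  fixes i j N :: nat
  assumes "i < N" "j < N" "i \<noteq> j"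
  shows "(i + N - j) mod N = N - (j + N - i) mod N"
  using assms by (auto simp: residue_diff_eq)

lemma residue_diff_diff:
  fixes i j k N :: nat
  assumes "j < N" "k < N"
  shows "(((i + N - j) mod N) + N - ((k + N - j) mod N)) mod N = (i + N - k) mod N"
proof -
  have "int ((((i + N - j) mod N) + N - ((k + N - j) mod N)) mod N) = int ((i + N - k) mod N)"
    using assms by (simp add: int_residue_diff mod_diff_eq)
  then show ?thesis by simp
qed

lemma residue_reflect_reflect:
  fixes k m N :: nat
  assumes "k < N"
  shows "(m + N - (m + N - k) mod N) mod N = k"
proof -
  have "int ((m + N - (m + N - k) mod N) mod N) = int k"
    using assms by (simp add: int_residue_diff mod_diff_right_eq)
  then show ?thesis by simp
qed

lemma bij_betw_residue_shift:
  fixes j N :: nat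
  assumes "j < N"
  shows "bij_betw (\<lambda>k. (k + N - j) mod N) {..<N} {..<N}"
proof (rule bij_betw_byWitness[where f' = "\<lambda>k. (k + j) mod N"])
  show "\<forall>k\<in>{..<N}. ((k + N - j) mod N + j) mod N = k"
  proof
    fix k assume "k \<in> {..<N}"
    then have "int (((k + N - j) mod N + j) mod N) = int k"
      using assms by (simp add: zmod_int of_nat_diff mod_add_left_eq)
    then show "((k + N - j) mod N + j) mod N = k" by simp
  qed
  show "\<forall>k\<in>{..<N}. ((k + j) mod N + N - j) mod N = k"
  proof
    fix k assume "k \<in> {..<N}"
    then have "int (((k + j) mod N + N - j) mod N) = int k"
      using assms int_residue_diff[of j N "(k + j) mod N"] by (simp add: zmod_int mod_diff_left_eq)
    then show "((k + j) mod N + N - j) mod N = k" by simp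
  qed
qed (use assms in auto)

lemma bij_betw_residue_reflect:
  fixes m N :: nat
  assumes "0 < N"
  shows "bij_betw (\<lambda>k. (m + N - k) mod N) {..<N} {..<N}"
  using assms residue_reflect_reflect
  by (intro bij_betw_byWitness[where f' = "\<lambda>k. (m + N - k) mod N"]) auto

lemma sum_residue_shift:
  fixes j N :: nat
  shows "j < N \<Longrightarrow> (\<Sum>k<N. f ((k + N - j) mod N)) = (\<Sum>k<N. f k)"
  using sum.reindex_bij_betw[OF bij_betw_residue_shift[of j N], of f] by simp

lemma sum_residue_reflect:
  fixes m N :: nat
  shows "0 < N \<Longrightarrow> (\<Sum>k<N. f ((m + N - k) mod N)) = (\<Sum>k<N. f k)"
  using sum.reindex_bij_betw[OF bij_betw_residue_reflect[of N m], of f] by simp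

section \<open>Circulant matrices\<close>

definition circulant :: "nat \<Rightarrow> (nat \<Rightarrow> 'a) \<Rightarrow> 'a mat" where
  "circulant N a = mat N N (\<lambda>(i, j). a ((i + N - j) mod N))"

definition circ_conv :: "nat \<Rightarrow> (nat \<Rightarrow> 'a :: comm_semiring_0) \<Rightarrow> (nat \<Rightarrow> 'a) \<Rightarrow> nat \<Rightarrow> 'a" where
  "circ_conv N a b m = (\<Sum>k<N. a ((m + N - k) mod N) * b k)"

lemma circulant_carrier [simp]: "circulant N a \<in> carrier_mat N N"
  and dim_row_circulant [simp]: "dim_row (circulant N a) = N"
  and dim_col_circulant [simp]: "dim_col (circulant N a) = N"
  by (simp_all add: circulant_def)

lemma index_circulant [simp]:
  "i < N \<Longrightarrow> j < N \<Longrightarrow> circulant N a $$ (i, j) = a ((i + N - j) mod N)"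
  by (simp add: circulant_def)

lemma circulant_cong: "(\<And>m. m < N \<Longrightarrow> a m = b m) \<Longrightarrow> circulant N a = circulant N b"
  by (rule eq_matI) auto

lemma mult_circulant:
  fixes a b :: "nat \<Rightarrow> 'a :: comm_semiring_0"
  shows "circulant N a * circulant N b = circulant N (circ_conv N a b)"
proof (rule eq_matI)
  fix i j assume "i < dim_row (circulant N (circ_conv N a b))" "j < dim_col (circulant N (circ_conv N a b))"
  then have ij: "i < N" "j < N" by simp_all
  define m where "m = (i + N - j) mod N"
  have "(circulant N a * circulant N b) $$ (i, j) = (\<Sum>k<N. a ((i + N - k) mod N) * b ((k + N - j) mod N))"
    using ij by (simp add: scalar_prod_def atLeast0LessThan)
  also have "\<dots> = (\<Sum>k<N. a ((m + N - (k + N - j) mod N) mod N) * b ((k + N - j) mod N))"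
    unfolding m_def using ij by (intro sum.cong refl) (simp add: residue_diff_diff)
  also have "\<dots> = circ_conv N a b m"
    unfolding circ_conv_def using sum_residue_shift[OF ij(2)] .
  finally show "(circulant N a * circulant N b) $$ (i, j) = circulant N (circ_conv N a b) $$ (i, j)"
    using ij by (simp add: m_def)
qed simp_all

lemma circ_conv_commute: "0 < N \<Longrightarrow> circ_conv N a b m = circ_conv N b a m"
proof -
  assume "0 < N"
  have "circ_conv N a b m = (\<Sum>k<N. a ((m + N - k) mod N) * b ((m + N - (m + N - k) mod N) mod N))"
    unfolding circ_conv_def by (intro sum.cong refl) (simp add: residue_reflect_reflect)
  also have "\<dots> = circ_conv N b a m"
    unfolding circ_conv_def using sum_residue_reflect[OF \<open>0 < N\<close>] by (simp add: mult.commute)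
  finally show ?thesis .
qed

lemma circulant_mult_commute:
  fixes a b :: "nat \<Rightarrow> 'a :: comm_semiring_0"
  shows "circulant N a * circulant N b = circulant N b * circulant N a"
  unfolding mult_circulant by (rule circulant_cong) (simp add: circ_conv_commute)

lemma circ_conv_centering:
  fixes a :: "nat \<Rightarrow> real"
  assumes "m < N"
  shows "circ_conv N a (\<lambda>k. (if k = 0 then 1 else 0) - 1 / real N) m = a m - (\<Sum>k<N. a k) / real N"
proof -
  have "circ_conv N a (\<lambda>k. (if k = 0 then 1 else 0) - 1 / real N) m
      = (\<Sum>k<N. if k = 0 then a ((m + N - k) mod N) else 0) - (\<Sum>k<N. a ((m + N - k) mod N)) / real N"
    unfolding circ_conv_def sum_divide_distrib sum_subtractf[symmetric]
    by (intro sum.cong refl) (simp add: algebra_simps)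
  then show ?thesis using assms by (simp add: sum_residue_reflect)
qed

lemma centering_mult_circulant:
  fixes a :: "nat \<Rightarrow> real"
  assumes "(\<Sum>k<N. a k) = 0"
  shows "circulant N (\<lambda>k. (if k = 0 then 1 else 0) - 1 / real N) * circulant N a = circulant N a"
  unfolding mult_circulant
  using assms by (auto intro!: circulant_cong simp: circ_conv_commute[where b = a] circ_conv_centering)

lemma pinv_eqI:
  fixes A X :: "real mat"
  assumes A: "A \<in> carrier_mat n m" and X: "X \<in> carrier_mat m n"
    and AXA: "A * X * A = A" and XAX: "X * A * X = X"
    and AX: "transpose_mat (A * X) = A * X" and XA: "transpose_mat (X * A) = X * A"
  shows "pinv A = X"
  unfolding pinv_def
proof (rule the_equality)
  fix Y assume "Y \<in> carrier_mat (dim_col A) (dim_row A) \<and> A * Y * A = A \<and> Y * A * Y = Y \<and>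
    transpose_mat (A * Y) = A * Y \<and> transpose_mat (Y * A) = Y * A"
  then have Y: "Y \<in> carrier_mat m n" and AYA: "A * Y * A = A" and YAY: "Y * A * Y = Y"
    and AY: "transpose_mat (A * Y) = A * Y" and YA: "transpose_mat (Y * A) = Y * A"
    using A by auto
  have "A * X = transpose_mat (A * Y * A * X)" using AYA AX by simp
  also have "A * Y * A * X = (A * Y) * (A * X)"
    using A X Y by (intro assoc_mult_mat[of _ n n _ m _ n]) auto
  also have "transpose_mat \<dots> = (A * X) * (A * Y)"
    using A X Y AX AY by (simp add: transpose_mult[of "A * Y" n n "A * X" n])
  also have "\<dots> = A * X * A * Y"
    using A X Y by (intro assoc_mult_mat[of _ n n _ m _ n, symmetric]) auto
  finally have AX_AY: "A * X = A * Y" using AXA by simp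
  have "X * A = transpose_mat (X * (A * Y * A))" using AYA XA by simp
  also have "X * (A * Y * A) = (X * A) * (Y * A)"
    using A X Y by (simp add: assoc_mult_mat[of X m n A m "Y * A" m])
  also have "transpose_mat \<dots> = (Y * A) * (X * A)"
    using A X Y XA YA by (simp add: transpose_mult[of "X * A" m m "Y * A" m])
  also have "\<dots> = Y * (A * X * A)"
    using A X Y by (simp add: assoc_mult_mat[of Y m n A m "X * A" m])
  finally have XA_YA: "X * A = Y * A" using AXA by simp
  have "Y = X * A * Y" using YAY XA_YA by simp
  also have "\<dots> = X * A * X" using A X Y AX_AY by simp
  finally show "Y = X" using XAX by simp
qed (use assms in auto)

lemma pinv_circulant:
  fixes l g :: "nat \<Rightarrow> real"
  assumes "(\<Sum>k<N. l k) = 0" "(\<Sum>k<N. g k) = 0"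
    and "\<And>m. m < N \<Longrightarrow> circ_conv N g l m = (if m = 0 then 1 else 0) - 1 / real N"
  shows "pinv (circulant N l) = circulant N g"
proof -
  define P where "P = circulant N (\<lambda>k. (if k = 0 then 1 else 0) - 1 / real N)"
  have GL: "circulant N g * circulant N l = P"
    unfolding P_def mult_circulant using assms(3) by (rule circulant_cong)
  have LG: "circulant N l * circulant N g = P"
    using GL circulant_mult_commute by metis
  have PL: "P * circulant N l = circulant N l" and PG: "P * circulant N g = circulant N g"
    unfolding P_def using assms(1,2) by (simp_all add: centering_mult_circulant)
  have "transpose_mat P = P"
    unfolding P_def by (rule eq_matI) (auto simp: residue_diff_eq)
  then show ?thesis
    using GL LG PL PG by (intro pinv_eqI[of _ N N]) auto
qed

lemma quadratic_form_unit_diff: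
  fixes X :: "'a :: comm_ring_1 mat"
  assumes "X \<in> carrier_mat n n" "u < n" "v < n"
  shows "(unit_vec n u - unit_vec n v) \<bullet> (X *\<^sub>v (unit_vec n u - unit_vec n v))
    = X $$ (u, u) - X $$ (u, v) - X $$ (v, u) + X $$ (v, v)"
  using assms
  by (simp add: mult_minus_distrib_mat_vec[of X n n] minus_scalar_prod_distrib[of _ n]
      scalar_prod_minus_distrib[of _ n])

section \<open>The Laplacian of the complement of the cycle\<close>

lemma adjN_iff_residue:
  assumes "i < N" "j < N"
  shows "adjN N i j \<longleftrightarrow> (j + N - i) mod N \<notin> {0, 1, N - 1}"
proof -
  have "(int j - int i) mod int N = int ((j + N - i) mod N)"
    using assms by (simp add: int_residue_diff)
  moreover have "int N - 1 = int (N - 1)" using assms by simp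
  ultimately show ?thesis
    unfolding adjN_def using assms by (auto simp: residue_diff_eq)
qed

lemma degN_eq:
  assumes "3 \<le> N" "i < N"
  shows "degN N i = N - 3"
proof -
  have "bij_betw (\<lambda>j. (j + N - i) mod N) {j \<in> {..<N}. adjN N i j} {m \<in> {..<N}. m \<notin> {0, 1, N - 1}}"
    using assms by (intro bij_betw_Collect bij_betw_residue_shift) (simp_all add: adjN_iff_residue)
  then have "degN N i = card ({..<N} - {0, 1, N - 1})"
    unfolding degN_def by (simp add: bij_betw_same_card set_diff_eq conj_commute)
  also have "\<dots> = N - 3" using assms by (subst card_Diff_subset) auto
  finally show ?thesis .
qed

definition laplacian_symbol :: "nat \<Rightarrow> nat \<Rightarrow> real" where
  "laplacian_symbol N k =
     (if k = 0 then real N - 2 else 0) + (if k = 1 then 1 else 0) + (if k = N - 1 then 1 else 0) - 1"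

lemma laplacian_eq_circulant:
  assumes "3 \<le> N"
  shows "laplacianN N = circulant N (laplacian_symbol N)"
proof (rule eq_matI)
  fix i j assume "i < dim_row (circulant N (laplacian_symbol N))" "j < dim_col (circulant N (laplacian_symbol N))"
  then have ij: "i < N" "j < N" by simp_all
  show "laplacianN N $$ (i, j) = circulant N (laplacian_symbol N) $$ (i, j)"
  proof (cases "i = j")
    case True
    then show ?thesis
      using assms ij by (simp add: laplacianN_def degN_eq laplacian_symbol_def of_nat_diff)
  next
    case False
    define m where "m = (i + N - j) mod N"
    have m: "0 < m" "m < N" "(j + N - i) mod N = N - m"
      using False ij residue_diff_swap[of j N i] by (auto simp: m_def residue_diff_eq)
    then have "adjN N i j \<longleftrightarrow> m \<noteq> 1 \<and> m \<noteq> N - 1"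
      using ij by (auto simp: adjN_iff_residue)
    then show ?thesis
      using assms False ij m by (simp add: laplacianN_def laplacian_symbol_def m_def)
  qed
qed (simp_all add: laplacianN_def)

lemma sum_laplacian_symbol: "2 \<le> N \<Longrightarrow> (\<Sum>k<N. laplacian_symbol N k) = 0"
  unfolding laplacian_symbol_def sum_subtractf sum.distrib by simp

lemma circ_conv_laplacian_symbol:
  fixes g :: "nat \<Rightarrow> real"
  assumes "3 \<le> N" "m < N"
  shows "circ_conv N g (laplacian_symbol N) m
    = (real N - 2) * g m + g ((m + N - 1) mod N) + g ((m + 1) mod N) - (\<Sum>k<N. g k)"
proof -
  have "circ_conv N g (laplacian_symbol N) m
    = (\<Sum>k<N. if k = 0 then (real N - 2) * g ((m + N - k) mod N) else 0)
      + (\<Sum>k<N. if k = 1 then g ((m + N - k) mod N) else 0)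
      + (\<Sum>k<N. if k = N - 1 then g ((m + N - k) mod N) else 0)
      - (\<Sum>k<N. g ((m + N - k) mod N))"
    unfolding circ_conv_def laplacian_symbol_def sum.distrib[symmetric] sum_subtractf[symmetric]
    by (intro sum.cong refl) (simp add: algebra_simps)
  then show ?thesis using assms by (simp add: sum_residue_reflect)
qed

section \<open>The Green function\<close>

lemma reflected_power_recurrence:
  fixes s c :: "'a :: comm_ring_1"
  assumes "s\<^sup>2 + c * s + 1 = 0" "0 < m" "m < N"
  shows "c * (s ^ m + s ^ (N - m)) + (s ^ (m - 1) + s ^ (N - (m - 1))) + (s ^ (m + 1) + s ^ (N - (m + 1))) = 0"
proof -
  obtain j where m: "m = j + 1" using assms(2) gr0_implies_Suc by auto
  obtain t where N: "N = j + 2 + t" using less_imp_Suc_add[OF assms(3)] m by auto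
  have "c * (s ^ m + s ^ (N - m)) + (s ^ (m - 1) + s ^ (N - (m - 1))) + (s ^ (m + 1) + s ^ (N - (m + 1)))
      = (s ^ j + s ^ t) * (s\<^sup>2 + c * s + 1)"
    unfolding m N by (simp add: algebra_simps power_add power2_eq_square)
  then show ?thesis using assms(1) by simp
qed

lemma reflected_power_recurrence_0:
  fixes s c :: "'a :: comm_ring_1"
  assumes "s\<^sup>2 + c * s + 1 = 0" "0 < N"
  shows "s * (c * (1 + s ^ N) + (s ^ (N - 1) + s) + (s + s ^ (N - 1))) = (s\<^sup>2 - 1) * (1 - s ^ N)"
proof -
  obtain n where N: "N = Suc n" using assms(2) gr0_implies_Suc by blast
  have "s * (c * (1 + s ^ N) + (s ^ (N - 1) + s) + (s + s ^ (N - 1))) - (s\<^sup>2 - 1) * (1 - s ^ N)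
      = (s\<^sup>2 + c * s + 1) * (1 + s ^ N)"
    unfolding N by (simp add: algebra_simps power2_eq_square)
  then show ?thesis using assms(1) by simp
qed

lemma DeltaN_pos: "4 < N \<Longrightarrow> 0 < DeltaN N"
  unfolding DeltaN_def by simp

lemma DeltaN_sq: "4 \<le> N \<Longrightarrow> (DeltaN N)\<^sup>2 = (real N - 2)\<^sup>2 - 4"
  unfolding DeltaN_def by (simp add: power2_eq_square algebra_simps)

lemma rhoN_gt_1: "4 < N \<Longrightarrow> 1 < rhoN N"
  using DeltaN_pos[of N] unfolding rhoN_def by simp

lemma rhoN_quadratic: "4 \<le> N \<Longrightarrow> (rhoN N)\<^sup>2 - (real N - 2) * rhoN N + 1 = 0"
  using DeltaN_sq[of N] unfolding rhoN_def by (simp add: power2_eq_square field_simps)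

lemma rhoN_sq_minus_1: "4 \<le> N \<Longrightarrow> (rhoN N)\<^sup>2 - 1 = DeltaN N * rhoN N"
  using DeltaN_sq[of N] unfolding rhoN_def by (simp add: power2_eq_square field_simps)

definition green_kernel :: "nat \<Rightarrow> nat \<Rightarrow> real" where
  "green_kernel N m = (- rhoN N) ^ m + (- rhoN N) ^ (N - m)"

lemma green_kernel_reflect: "m \<le> N \<Longrightarrow> green_kernel N (N - m) = green_kernel N m"
  unfolding green_kernel_def by simp

lemma green_kernel_mod: "m \<le> N \<Longrightarrow> green_kernel N (m mod N) = green_kernel N m"
  by (cases "m = N") (simp_all add: green_kernel_def)

lemma green_kernel_recurrence:
  assumes "4 < N" "m < N"
  shows "(real N - 2) * green_kernel N m + green_kernel N ((m + N - 1) mod N) + green_kernel N ((m + 1) mod N)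
    = (if m = 0 then - (DeltaN N * (1 - (- rhoN N) ^ N)) else 0)"
proof -
  have quadratic: "(- rhoN N)\<^sup>2 + (real N - 2) * (- rhoN N) + 1 = 0"
    using rhoN_quadratic[of N] assms by simp
  show ?thesis
  proof (cases "m = 0")
    case True
    have "rhoN N * ((real N - 2) * green_kernel N 0 + green_kernel N (N - 1) + green_kernel N 1
        + DeltaN N * (1 - (- rhoN N) ^ N)) = 0"
      using reflected_power_recurrence_0[OF quadratic] rhoN_sq_minus_1[of N] assms
      unfolding green_kernel_def by (simp add: algebra_simps)
    then show ?thesis
      using True rhoN_gt_1[OF assms(1)] assms by (simp add: green_kernel_mod add_eq_0_iff)
  next
    case False
    have "(m + N - 1) mod N = m - 1"
      using residue_diff_eq[of m N 1] False assms by simp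
    moreover have "(m + 1) mod N = m + 1 \<or> m + 1 = N"
      using assms by (cases "m + 1 = N") auto
    ultimately show ?thesis
      using reflected_power_recurrence[OF quadratic, of m N] False assms
      unfolding green_kernel_def by auto
  qed
qed

definition green_fun :: "nat \<Rightarrow> nat \<Rightarrow> real" where
  "green_fun N m = - green_kernel N m / (DeltaN N * (1 - (- rhoN N) ^ N)) - 1 / (real N)\<^sup>2"

lemma green_fun_denominator_nonzero:
  assumes "4 < N"
  shows "DeltaN N * (1 - (- rhoN N) ^ N) \<noteq> 0"
proof -
  have abs: "\<bar>(- rhoN N) ^ N\<bar> = rhoN N ^ N" and gt: "1 < rhoN N ^ N"
    using rhoN_gt_1[OF assms] assms by (simp_all add: power_abs one_less_power)
  have "(- rhoN N) ^ N \<noteq> 1"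
  proof
    assume "(- rhoN N) ^ N = 1"
    then show False using abs gt by simp
  qed
  then show ?thesis using DeltaN_pos[OF assms] by simp
qed

lemma green_fun_recurrence:
  assumes "4 < N" "m < N"
  shows "(real N - 2) * green_fun N m + green_fun N ((m + N - 1) mod N) + green_fun N ((m + 1) mod N)
    = (if m = 0 then 1 else 0) - 1 / real N"
proof -
  define D where "D = DeltaN N * (1 - (- rhoN N) ^ N)"
  have G: "green_fun N k = - green_kernel N k * (1 / D) - 1 / (real N)\<^sup>2" for k
    unfolding green_fun_def D_def by simp
  have lin: "(real N - 2) * (- x * c - e) + (- y * c - e) + (- z * c - e)
      = - ((real N - 2) * x + y + z) * c - real N * e" for x y z c e :: real
    by (simp add: algebra_simps)
  have "(real N - 2) * green_fun N m + green_fun N ((m + N - 1) mod N) + green_fun N ((m + 1) mod N)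
    = - ((real N - 2) * green_kernel N m + green_kernel N ((m + N - 1) mod N)
         + green_kernel N ((m + 1) mod N)) * (1 / D) - real N * (1 / (real N)\<^sup>2)"
    unfolding G by (rule lin)
  also have "(real N - 2) * green_kernel N m + green_kernel N ((m + N - 1) mod N)
      + green_kernel N ((m + 1) mod N) = (if m = 0 then - D else 0)"
    unfolding D_def by (rule green_kernel_recurrence[OF assms])
  also have "real N * (1 / (real N)\<^sup>2) = 1 / real N"
    by (simp add: power2_eq_square)
  finally show ?thesis
    using green_fun_denominator_nonzero[OF assms(1)] unfolding D_def by simp
qed

lemma sum_green_fun:
  assumes "4 < N"
  shows "(\<Sum>m<N. green_fun N m) = 0"
proof -
  define S where "S = (\<Sum>m<N. green_fun N m)"
  have "(\<Sum>m<N. green_fun N ((m + N - 1) mod N)) = S"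
    using sum_residue_shift[of 1 N "green_fun N"] assms unfolding S_def by simp
  moreover have "(\<Sum>m<N. green_fun N ((m + 1) mod N)) = S"
    using sum_residue_shift[of "N - 1" N "green_fun N"] assms unfolding S_def by simp
  ultimately have "(real N - 2) * S + S + S
      = (\<Sum>m<N. (real N - 2) * green_fun N m + green_fun N ((m + N - 1) mod N) + green_fun N ((m + 1) mod N))"
    unfolding S_def by (simp add: sum.distrib sum_distrib_left)
  also have "\<dots> = (\<Sum>m<N. (if m = 0 then 1 else 0) - 1 / real N)"
    by (intro sum.cong refl green_fun_recurrence[OF assms]) simp
  also have "\<dots> = 0"
    using assms by (simp add: sum_subtractf)
  finally have "real N * S = 0" by (simp add: algebra_simps)
  then show ?thesis using assms unfolding S_def by simp
qed

lemma pinv_laplacian: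
  assumes "4 < N"
  shows "pinv (laplacianN N) = circulant N (green_fun N)"
proof -
  have "laplacianN N = circulant N (laplacian_symbol N)"
    using assms by (simp add: laplacian_eq_circulant)
  moreover have "circ_conv N (green_fun N) (laplacian_symbol N) m = (if m = 0 then 1 else 0) - 1 / real N"
    if "m < N" for m
    using assms that circ_conv_laplacian_symbol[of N m "green_fun N"] green_fun_recurrence[OF assms that]
    by (simp add: sum_green_fun)
  ultimately show ?thesis
    using assms by (simp add: pinv_circulant sum_laplacian_symbol sum_green_fun)
qed

lemma green_fun_reflect: "m \<le> N \<Longrightarrow> green_fun N (N - m) = green_fun N m"
  unfolding green_fun_def by (simp add: green_kernel_reflect)

lemma eff_res_eq_green_fun:
  assumes "4 < N" "u < N" "v < N"
  shows "eff_res N u v = 2 * (green_fun N 0 - green_fun N ((v + N - u) mod N))"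
proof -
  have "green_fun N ((u + N - v) mod N) = green_fun N ((v + N - u) mod N)"
  proof (cases "u = v")
    case False
    have "(u + N - v) mod N = N - (v + N - u) mod N"
      using assms False by (intro residue_diff_swap)
    then show ?thesis using green_fun_reflect assms by simp
  qed simp
  then show ?thesis
    using assms quadratic_form_unit_diff[of "circulant N (green_fun N)" N u v]
    by (simp add: eff_res_def pinv_laplacian)
qed

lemma green_kernel_odd:
  assumes "odd N" "q \<le> N"
  shows "green_kernel N q = (-1) ^ q * (rhoN N ^ q - rhoN N ^ (N - q))"
proof -
  obtain t where t: "N = q + t" using assms(2) le_Suc_ex by blast
  have "(-1 :: real) ^ t = - ((-1) ^ q)"
    using assms(1) unfolding t by (cases "even q") auto
  moreover have "(- rhoN N) ^ q = (-1) ^ q * rhoN N ^ q" "(- rhoN N) ^ t = (-1) ^ t * rhoN N ^ t"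
    by (rule power_minus)+
  ultimately show ?thesis
    unfolding green_kernel_def using t by (simp add: algebra_simps)
qed

lemma resist_formula_eq_green_fun:
  assumes "4 < N" "odd N" "q \<le> N"
  shows "resist_formula N q = 2 * (green_fun N 0 - green_fun N q)"
proof -
  have "2 * (green_fun N 0 - green_fun N q)
      = 2 / (DeltaN N * (1 - (- rhoN N) ^ N)) * (green_kernel N q - green_kernel N 0)"
    unfolding green_fun_def by (simp add: diff_divide_distrib algebra_simps)
  moreover have "(- rhoN N) ^ N = - (rhoN N ^ N)" "green_kernel N 0 = 1 - rhoN N ^ N"
    using assms(2) by (simp_all add: green_kernel_def power_minus_odd)
  ultimately show ?thesis
    unfolding resist_formula_def green_kernel_odd[OF assms(2,3)] by (simp add: algebra_simps)
qed

lemma resist_formula_pos: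
  assumes "4 < N" "0 < q" "q < N"
  shows "0 < resist_formula N q"
proof -
  have "1 < rhoN N ^ q" "rhoN N ^ q < rhoN N ^ N"
    "1 < rhoN N ^ (N - q)" "rhoN N ^ (N - q) < rhoN N ^ N"
    using rhoN_gt_1[OF assms(1)] assms by (simp_all add: one_less_power power_strict_increasing)
  then have "0 < rhoN N ^ N - 1 + (-1) ^ q * (rhoN N ^ q - rhoN N ^ (N - q))"
    by (cases "even q") auto
  moreover have "0 < DeltaN N * (rhoN N ^ N + 1)"
    using DeltaN_pos[OF assms(1)] rhoN_gt_1[OF assms(1)] by (simp add: add_pos_pos)
  ultimately show ?thesis unfolding resist_formula_def by simp
qed

theorem theorem4p1:
  fixes N u v :: nat
  assumes "N \<ge> 5" and "odd N" and "u < N" and "v < N"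
  defines "q \<equiv> (v + N - u) mod N"
  shows "eff_res N u v = resist_formula N q \<and>
         (\<forall>p<N. resist_formula N p = resist_formula N (N - p)) \<and>
         eff_res N u v = resist_formula N (min q (N - q)) \<and>
         (u \<noteq> v \<longrightarrow> eff_res N u v > 0)"
proof -
  have N: "4 < N" using assms(1) by simp
  have q: "q < N" unfolding q_def using assms(3) by simp
  have res: "eff_res N u v = resist_formula N q"
    using eff_res_eq_green_fun[OF N assms(3,4)] resist_formula_eq_green_fun[OF N assms(2)] q
    unfolding q_def by simp
  have sym: "resist_formula N p = resist_formula N (N - p)" if "p < N" for p
    using resist_formula_eq_green_fun[OF N assms(2)] green_fun_reflect[of p N] that by simp
  have "u \<noteq> v \<Longrightarrow> 0 < q"
    using assms(3,4) unfolding q_def by (auto simp: residue_diff_eq)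
  then have "u \<noteq> v \<longrightarrow> 0 < eff_res N u v"
    using res resist_formula_pos[OF N _ q] by simp
  moreover have "eff_res N u v = resist_formula N (min q (N - q))"
    using res sym[OF q] by (simp add: min_def)
  ultimately show ?thesis using res sym by blast
qed

end
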